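(* Let $G$ be a finite abstract simplicial complex with connection matrix $L$, and let $g=L^{-1}$ (which exists and has integer entries). Then $\sum_{x,y\in G} g(x,y)=\chi(G)$, where $\chi(G)=\sum_{x\in G}\omega(x)$.
   Context: A finite abstract simplicial complex $G$ is a finite set of non-empty finite sets closed under taking non-empty subsets; its elements are called simplices. For $x\in G$ let $\dim(x)=|x|-1$ and $\omega(x)=(-1)^{\dim(x)}$. The connection matrix $L$ of $G$ is indexed by the simplices with $L(x,y)=1$ if $x\cap y\neq\emptyset$ and $L(x,y)=0$ otherwise. $\chi(G)=\sum_{x\in G}\omega(x)$ is the Euler characteristic. *)

theory Defs
  imports Complex_Main
begin

definition simplicial_complex :: "'a set set \<Rightarrow> bool" where
  "simplicial_complex G \<longleftrightarrow> finite G \<and> (\<forall>x\<in>G. finite x \<and> x \<noteq> {} \<and>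
      (\<forall>y. y \<subseteq> x \<and> y \<noteq> {} \<longrightarrow> y \<in> G))"

definition dim :: "'a set \<Rightarrow> int" where
  "dim x = int (card x) - 1"

definition omega :: "'a set \<Rightarrow> int" where
  "omega x = (-1) ^ nat (dim x)"

definition euler_char :: "'a set set \<Rightarrow> int" where
  "euler_char G = (\<Sum>x\<in>G. omega x)"

text \<open>Connection matrix, as a function on pairs of simplices (only its values on G x G matter).\<close>
definition connection :: "'a set \<Rightarrow> 'a set \<Rightarrow> 'b::{zero,one}" where
  "connection x y = (if x \<inter> y \<noteq> {} then 1 else 0)"

definition is_inverse_on :: "'i set \<Rightarrow> ('i \<Rightarrow> 'i \<Rightarrow> 'b::comm_ring_1) \<Rightarrow> ('i \<Rightarrow> 'i \<Rightarrow> 'b) \<Rightarrow> bool" where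
  "is_inverse_on G M g \<longleftrightarrow>
     (\<forall>x\<in>G. \<forall>y\<in>G. (\<Sum>z\<in>G. M x z * g z y) = (if x = y then 1 else 0)) \<and>
     (\<forall>x\<in>G. \<forall>y\<in>G. (\<Sum>z\<in>G. g x z * M z y) = (if x = y then 1 else 0))"

end

theory Submission
  imports Defs
begin

text \<open>Write s(z) = (-1)^|z| (\<open>card_sign\<close>), so that \<omega> = -s on simplices. The matrix
g(x,y) = \<omega>(x) \<omega>(y) \<Sum>{\<omega>(w) | w \<in> G, x \<union> y \<subseteq> w} inverts L: summing s over the faces of w that
meet x gives -[w \<subseteq> x], and summing s over the Boolean interval from y to x gives s(x) [x = y];
both are instances of \<Sum>{(-1)^|T| | T \<subseteq> S} = [S = {}]. Inverses are unique, and summing g over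
all pairs gives \<Sum>{-s(w) (\<Sum>{s(x) | x \<in> G, x \<subseteq> w})^2 | w \<in> G} = \<Sum>{\<omega>(w) | w \<in> G}, because
the inner sum runs over the non-empty subsets of w and equals -1.\<close>

lemma is_inverse_on_unique:
  assumes g: "is_inverse_on G M g" and h: "is_inverse_on G M h"
    and "finite G" "x \<in> G" "y \<in> G"
  shows "g x y = h x y"
proof -
  have "g x y = (\<Sum>z\<in>G. g x z * (if z = y then 1 else 0))"
    using assms by (simp add: if_distrib sum.delta cong: if_cong)
  also have "\<dots> = (\<Sum>z\<in>G. g x z * (\<Sum>u\<in>G. M z u * h u y))"
    using h \<open>y \<in> G\<close> unfolding is_inverse_on_def by (intro sum.cong) auto
  also have "\<dots> = (\<Sum>u\<in>G. (\<Sum>z\<in>G. g x z * M z u) * h u y)"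
    by (simp add: sum_distrib_left sum_distrib_right mult.assoc) (rule sum.swap)
  also have "\<dots> = (\<Sum>u\<in>G. if x = u then h u y else 0)"
    using g \<open>x \<in> G\<close> unfolding is_inverse_on_def by (intro sum.cong) auto
  also have "\<dots> = h x y"
    using assms by simp
  finally show ?thesis .
qed

definition card_sign :: "'a set \<Rightarrow> 'b::comm_ring_1" where
  "card_sign z = (-1) ^ card z"

lemma card_sign_square: "card_sign z * card_sign z = 1"
  by (simp add: card_sign_def flip: power_add)

lemma sum_card_sign_between:
  assumes "finite S" "U \<subseteq> S"
  shows "(\<Sum>T | U \<subseteq> T \<and> T \<subseteq> S. card_sign T) = (if U = S then card_sign S else 0)"
proof (cases "U = S")
  case True
  then have "{T. U \<subseteq> T \<and> T \<subseteq> S} = {S}" by auto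
  with True show ?thesis by simp
next
  case False
  have "finite {T. U \<subseteq> T \<and> T \<subseteq> S}"
    using assms(1) by (simp add: finite_subset[of _ "Pow S"] subset_iff)
  moreover have "card {T \<in> {T. U \<subseteq> T \<and> T \<subseteq> S}. even (card T)}
      = card {T \<in> {T. U \<subseteq> T \<and> T \<subseteq> S}. odd (card T)}"
    using card_subsupersets_even_odd[OF assms(1), of U] assms(2) False by (simp add: conj_ac)
  ultimately show ?thesis
    using False unfolding card_sign_def by (simp add: sum_alternating_cancels)
qed

lemma sum_card_sign_Pow:
  assumes "finite S"
  shows "(\<Sum>T\<in>Pow S. card_sign T) = of_bool (S = {})"
proof -
  have "Pow S = {T. {} \<subseteq> T \<and> T \<subseteq> S}" by auto
  then show ?thesis
    using sum_card_sign_between[OF assms empty_subsetI]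
    by (cases "S = {}") (simp_all add: card_sign_def)
qed

lemma sum_card_sign_meeting:
  assumes "finite w" "w \<noteq> {}"
  shows "(\<Sum>z | z \<subseteq> w \<and> z \<inter> x \<noteq> {}. card_sign z) = - of_bool (w \<subseteq> x)"
proof -
  have meeting: "{z. z \<subseteq> w \<and> z \<inter> x \<noteq> {}} = Pow w - Pow (w - x)" by auto
  have "(\<Sum>z\<in>Pow w. card_sign z)
      = (\<Sum>z\<in>Pow w - Pow (w - x). card_sign z) + (\<Sum>z\<in>Pow (w - x). card_sign z)"
    using assms by (intro sum.subset_diff) auto
  moreover have "w - x = {} \<longleftrightarrow> w \<subseteq> x" by auto
  ultimately have "(\<Sum>z\<in>Pow w - Pow (w - x). card_sign z) + of_bool (w \<subseteq> x) = 0"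
    using assms by (simp add: sum_card_sign_Pow)
  then show ?thesis
    unfolding meeting by (metis eq_neg_iff_add_eq_0)
qed

lemma simplicial_complexD:
  assumes "simplicial_complex G"
  shows "finite G" and "x \<in> G \<Longrightarrow> finite x" and "x \<in> G \<Longrightarrow> x \<noteq> {}"
    and "x \<in> G \<Longrightarrow> y \<subseteq> x \<Longrightarrow> y \<noteq> {} \<Longrightarrow> y \<in> G"
  using assms unfolding simplicial_complex_def by blast+

lemma of_int_omega:
  assumes "x \<noteq> {}" "finite x"
  shows "of_int (omega x) = - card_sign x"
proof -
  obtain n where "card x = Suc n"
    using assms by (metis card_0_eq not0_implies_Suc)
  then show ?thesis
    unfolding omega_def dim_def card_sign_def by simp
qed

lemma connection_sym: "connection x y = connection y x"
  unfolding connection_def by (simp add: Int_commute)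

lemma sum_card_sign_faces_meeting:
  assumes G: "simplicial_complex G" and w: "w \<in> G"
  shows "(\<Sum>z\<in>G. connection x z * of_bool (z \<subseteq> w) * card_sign z)
      = - (of_bool (w \<subseteq> x) :: 'b::comm_ring_1)"
proof -
  have faces: "{z \<in> G. z \<subseteq> w \<and> z \<inter> x \<noteq> {}} = {z. z \<subseteq> w \<and> z \<inter> x \<noteq> {}}"
    using simplicial_complexD(4)[OF G w] by auto
  have "(\<Sum>z\<in>G. connection x z * of_bool (z \<subseteq> w) * card_sign z)
      = (\<Sum>z\<in>G. if z \<subseteq> w \<and> z \<inter> x \<noteq> {} then card_sign z else 0)"
    by (intro sum.cong) (auto simp: connection_def Int_commute)
  also have "\<dots> = (\<Sum>z \<in> {z \<in> G. z \<subseteq> w \<and> z \<inter> x \<noteq> {}}. card_sign z)"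
    using simplicial_complexD(1)[OF G] by (simp add: sum.inter_filter)
  also have "\<dots> = - of_bool (w \<subseteq> x)"
    unfolding faces using sum_card_sign_meeting simplicial_complexD(2,3)[OF G w] by blast
  finally show ?thesis .
qed

lemma sum_card_sign_faces_between:
  assumes G: "simplicial_complex G" and x: "x \<in> G" and "y \<noteq> {}"
  shows "(\<Sum>w\<in>G. of_bool (y \<subseteq> w \<and> w \<subseteq> x) * card_sign w)
      = of_bool (x = y) * (card_sign x :: 'b::comm_ring_1)"
proof (cases "y \<subseteq> x")
  case True
  have "(\<Sum>w\<in>G. of_bool (y \<subseteq> w \<and> w \<subseteq> x) * card_sign w)
      = (\<Sum>w\<in>G. if y \<subseteq> w \<and> w \<subseteq> x then card_sign w else 0)"
    by (intro sum.cong) auto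
  also have "\<dots> = (\<Sum>w \<in> {w \<in> G. y \<subseteq> w \<and> w \<subseteq> x}. card_sign w)"
    using simplicial_complexD(1)[OF G] by (simp add: sum.inter_filter)
  also have "{w \<in> G. y \<subseteq> w \<and> w \<subseteq> x} = {w. y \<subseteq> w \<and> w \<subseteq> x}"
    using simplicial_complexD(4)[OF G x] \<open>y \<noteq> {}\<close> by auto
  also have "(\<Sum>w | y \<subseteq> w \<and> w \<subseteq> x. card_sign w) = (if y = x then card_sign x else 0)"
    using sum_card_sign_between[OF simplicial_complexD(2)[OF G x] True] .
  finally show ?thesis by (cases "x = y") auto
next
  case False
  then have "(\<Sum>w\<in>G. of_bool (y \<subseteq> w \<and> w \<subseteq> x) * card_sign w) = (0 :: 'b)"
    by (intro sum.neutral) auto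
  with False show ?thesis by auto
qed

definition connection_inverse :: "'a set set \<Rightarrow> 'a set \<Rightarrow> 'a set \<Rightarrow> 'b::comm_ring_1" where
  "connection_inverse G x y =
     - card_sign x * card_sign y * (\<Sum>w\<in>G. of_bool (x \<subseteq> w \<and> y \<subseteq> w) * card_sign w)"

lemma connection_inverse_sym: "connection_inverse G x y = connection_inverse G y x"
  unfolding connection_inverse_def by (simp add: mult_ac conj_commute)

lemma connection_times_connection_inverse:
  assumes G: "simplicial_complex G" and x: "x \<in> G" and y: "y \<in> G"
  shows "(\<Sum>z\<in>G. connection x z * connection_inverse G z y)
      = (of_bool (x = y) :: 'b::comm_ring_1)"
proof -
  have "(\<Sum>z\<in>G. connection x z * connection_inverse G z y)
      = (\<Sum>z\<in>G. \<Sum>w\<in>G. - card_sign y * (of_bool (y \<subseteq> w) * card_sign w *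
          (connection x z * of_bool (z \<subseteq> w) * card_sign z)))"
    unfolding connection_inverse_def sum_distrib_left
    by (intro sum.cong refl) (simp add: mult_ac)
  also have "\<dots> = - card_sign y * (\<Sum>w\<in>G. of_bool (y \<subseteq> w) * card_sign w *
          (\<Sum>z\<in>G. connection x z * of_bool (z \<subseteq> w) * card_sign z))"
    unfolding sum_distrib_left by (rule sum.swap)
  also have "\<dots> = - card_sign y *
      (\<Sum>w\<in>G. of_bool (y \<subseteq> w) * card_sign w * - of_bool (w \<subseteq> x))"
    by (simp add: sum_card_sign_faces_meeting[OF G] cong: sum.cong)
  also have "\<dots> = card_sign y * (\<Sum>w\<in>G. of_bool (y \<subseteq> w \<and> w \<subseteq> x) * card_sign w)"
    by (simp add: sum_negf of_bool_conj mult_ac)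
  also have "\<dots> = card_sign y * of_bool (x = y) * card_sign x"
    unfolding sum_card_sign_faces_between[OF G x simplicial_complexD(3)[OF G y]]
    by (rule mult.assoc[symmetric])
  also have "\<dots> = of_bool (x = y)"
    using card_sign_square[of x] by auto
  finally show ?thesis .
qed

lemma connection_inverse_is_inverse:
  assumes G: "simplicial_complex G"
  shows "is_inverse_on G connection (connection_inverse G :: 'a set \<Rightarrow> 'a set \<Rightarrow> 'b::comm_ring_1)"
  unfolding is_inverse_on_def
proof (intro conjI ballI)
  fix x y assume "x \<in> G" "y \<in> G"
  then show "(\<Sum>z\<in>G. connection x z * connection_inverse G z y) = (if x = y then 1 else 0 :: 'b)"
    using connection_times_connection_inverse[OF G \<open>x \<in> G\<close> \<open>y \<in> G\<close>]
    by (simp only: of_bool_def)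
  have "(\<Sum>z\<in>G. connection_inverse G x z * connection z y)
      = (\<Sum>z\<in>G. connection y z * connection_inverse G z x :: 'b)"
    by (simp add: connection_inverse_sym connection_sym mult.commute)
  also have "\<dots> = of_bool (y = x)"
    by (rule connection_times_connection_inverse[OF G \<open>y \<in> G\<close> \<open>x \<in> G\<close>])
  finally show "(\<Sum>z\<in>G. connection_inverse G x z * connection z y) = (if x = y then 1 else 0 :: 'b)"
    by (simp only: of_bool_def eq_commute)
qed

lemma sum_card_sign_faces:
  assumes G: "simplicial_complex G" and w: "w \<in> G"
  shows "(\<Sum>z\<in>G. of_bool (z \<subseteq> w) * card_sign z) = (-1 :: 'b::comm_ring_1)"
proof -
  have "(\<Sum>z\<in>G. of_bool (z \<subseteq> w) * card_sign z)
      = (\<Sum>z\<in>G. connection w z * of_bool (z \<subseteq> w) * card_sign z :: 'b)"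
    by (intro sum.cong) (auto simp: connection_def Int_absorb1 dest: simplicial_complexD(3)[OF G])
  then show ?thesis
    using sum_card_sign_faces_meeting[OF G w, of w] by simp
qed

lemma sum_connection_inverse:
  assumes G: "simplicial_complex G"
  shows "(\<Sum>x\<in>G. \<Sum>y\<in>G. connection_inverse G x y)
      = (of_int (euler_char G) :: 'b::comm_ring_1)"
proof -
  let ?f = "\<lambda>w x. of_bool (x \<subseteq> w) * card_sign x :: 'b"
  have "(\<Sum>x\<in>G. \<Sum>y\<in>G. connection_inverse G x y)
      = (\<Sum>x\<in>G. \<Sum>y\<in>G. \<Sum>w\<in>G. - card_sign w * (?f w x * ?f w y))"
    unfolding connection_inverse_def sum_distrib_left
    by (intro sum.cong refl) (simp add: of_bool_conj mult_ac)
  also have "\<dots> = (\<Sum>x\<in>G. \<Sum>w\<in>G. \<Sum>y\<in>G. - card_sign w * (?f w x * ?f w y))"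
    by (intro sum.cong refl sum.swap)
  also have "\<dots> = (\<Sum>w\<in>G. \<Sum>x\<in>G. \<Sum>y\<in>G. - card_sign w * (?f w x * ?f w y))"
    by (rule sum.swap)
  also have "\<dots> = (\<Sum>w\<in>G. - card_sign w * ((\<Sum>x\<in>G. ?f w x) * (\<Sum>y\<in>G. ?f w y)))"
    unfolding sum_product by (simp only: sum_distrib_left)
  also have "\<dots> = (\<Sum>w\<in>G. of_int (omega w))"
  proof (rule sum.cong[OF refl])
    fix w assume w: "w \<in> G"
    show "- card_sign w * ((\<Sum>x\<in>G. ?f w x) * (\<Sum>y\<in>G. ?f w y)) = of_int (omega w)"
      using sum_card_sign_faces[OF G w, where 'b='b]
        of_int_omega[OF simplicial_complexD(3,2)[OF G w], where 'b='b]
      by simp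
  qed
  finally show ?thesis
    unfolding euler_char_def by simp
qed

theorem theorem2:
  fixes G :: "'a set set"
  assumes "simplicial_complex G"
  shows "(\<exists>g :: 'a set \<Rightarrow> 'a set \<Rightarrow> int. is_inverse_on G connection g)
       \<and> (\<forall>g :: 'a set \<Rightarrow> 'a set \<Rightarrow> real. is_inverse_on G connection g \<longrightarrow>
            (\<Sum>x\<in>G. \<Sum>y\<in>G. g x y) = real_of_int (euler_char G))"
proof (intro conjI allI impI)
  show "\<exists>g :: 'a set \<Rightarrow> 'a set \<Rightarrow> int. is_inverse_on G connection g"
    using connection_inverse_is_inverse[OF assms] by blast
  fix g :: "'a set \<Rightarrow> 'a set \<Rightarrow> real"
  assume g: "is_inverse_on G connection g"
  have "(\<Sum>x\<in>G. \<Sum>y\<in>G. g x y) = (\<Sum>x\<in>G. \<Sum>y\<in>G. connection_inverse G x y)"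
    using is_inverse_on_unique[OF g connection_inverse_is_inverse[OF assms]]
      simplicial_complexD(1)[OF assms]
    by (intro sum.cong refl)
  also have "\<dots> = real_of_int (euler_char G)"
    by (rule sum_connection_inverse[OF assms])
  finally show "(\<Sum>x\<in>G. \<Sum>y\<in>G. g x y) = real_of_int (euler_char G)" .
qed

end
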